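(* Suppose that \begin{itemize} \item $X$ is geodetic; and \item either \begin{itemize} \item $X$ is Menger convex and has no 4-cuts, or \item $X$ is geodesic. \end{itemize} \end{itemize} Then $\mathit{HM}_2(X)=0$.
   Context: Let $X$ be a metric space. Write $y$ is between $x$ and $z$ if $d(x,y)+d(y,z)=d(x,z)$, and strictly between if moreover $x\neq y\neq z$. $X$ is Menger convex if for any two distinct points there is a point strictly between them. $X$ has no 4-cuts if whenever $y_1\neq y_2$, $d(x,y_1)+d(y_1,y_2)=d(x,y_2)$ and $d(y_1,y_2)+d(y_2,z)=d(y_1,z)$ imply $d(x,z)=d(x,y_1)+d(y_1,y_2)+d(y_2,z)$. $X$ is geodesic if for any $x,y$ there is an isometry $\gamma:[0,a]\to X$ with $\gamma(0)=x$, $\gamma(a)=y$. $X$ is geodetic if for any distinct $x,z$, whenever $y_1$ and $y_2$ are both between $x$ and $z$, either ($y_1$ is between $x$ and $y_2$ and $y_2$ is between $y_1$ and $z$) or ($y_2$ is between $x$ and $y_1$ and $y_1$ is between $y_2$ and $z$). The magnitude homology $\mathit{HM}^\ell_n(X)$ is the degree-$n$ homology of the chain complex whose $n$-chains in grading $\ell$ are the free abelian group on symbols $\langle x_0,\dots,x_n\rangle$ with $x_i\neq x_{i+1}$ and $d(x_0,x_1)+\cdots+d(x_{n-1},x_n)=\ell$, with boundary $\sum_i(-1)^i d^i$, where $d^i$ deletes $x_i$ if $x_i$ is between $x_{i-1}$ and $x_{i+1}$ and is $0$ otherwise (deleting an endpoint always gives $0$); $\mathit{HM}_2(X)=0$ means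 vanishing in all gradings. *)

theory Defs
  imports "HOL-Analysis.Analysis"
begin

definition between :: "'a metric \<Rightarrow> 'a \<Rightarrow> 'a \<Rightarrow> 'a \<Rightarrow> bool" where
  "between m x y z \<longleftrightarrow> mdist m x y + mdist m y z = mdist m x z"

definition menger_convex :: "'a metric \<Rightarrow> bool" where
  "menger_convex m \<longleftrightarrow> (\<forall>x\<in>mspace m. \<forall>z\<in>mspace m. x \<noteq> z \<longrightarrow>
      (\<exists>y\<in>mspace m. x \<noteq> y \<and> y \<noteq> z \<and> between m x y z))"

definition no_4_cuts :: "'a metric \<Rightarrow> bool" where
  "no_4_cuts m \<longleftrightarrow> (\<forall>x\<in>mspace m. \<forall>y1\<in>mspace m. \<forall>y2\<in>mspace m. \<forall>z\<in>mspace m.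
      y1 \<noteq> y2 \<and> between m x y1 y2 \<and> between m y1 y2 z \<longrightarrow>
      mdist m x z = mdist m x y1 + mdist m y1 y2 + mdist m y2 z)"

definition geodesic_space :: "'a metric \<Rightarrow> bool" where
  "geodesic_space m \<longleftrightarrow> (\<forall>x\<in>mspace m. \<forall>y\<in>mspace m. \<exists>a::real. \<exists>\<gamma>::real \<Rightarrow> 'a.
      0 \<le> a \<and> \<gamma> ` {0..a} \<subseteq> mspace m \<and>
      (\<forall>s\<in>{0..a}. \<forall>t\<in>{0..a}. mdist m (\<gamma> s) (\<gamma> t) = \<bar>s - t\<bar>) \<and>
      \<gamma> 0 = x \<and> \<gamma> a = y)"

definition geodetic :: "'a metric \<Rightarrow> bool" where
  "geodetic m \<longleftrightarrow> (\<forall>x\<in>mspace m. \<forall>z\<in>mspace m. \<forall>y1\<in>mspace m. \<forall>y2\<in>mspace m.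
      x \<noteq> z \<and> between m x y1 z \<and> between m x y2 z \<longrightarrow>
      (between m x y1 y2 \<and> between m y1 y2 z) \<or> (between m x y2 y1 \<and> between m y2 y1 z))"

text \<open>Generators of the magnitude chain group MC_n^l: tuples (x_0,...,x_n) as lists
  of length n+1, consecutive entries distinct, total length l.\<close>

definition mag_gen :: "'a metric \<Rightarrow> nat \<Rightarrow> real \<Rightarrow> 'a list \<Rightarrow> bool" where
  "mag_gen m n l xs \<longleftrightarrow> length xs = n + 1 \<and> set xs \<subseteq> mspace m \<and>
      (\<forall>i<n. xs ! i \<noteq> xs ! Suc i) \<and>
      (\<Sum>i<n. mdist m (xs ! i) (xs ! Suc i)) = l"

text \<open>Chains: finitely supported integer-valued functions on generators (free abelian group).\<close>

definition mag_chains :: "'a metric \<Rightarrow> nat \<Rightarrow> real \<Rightarrow> ('a list \<Rightarrow> int) set" where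
  "mag_chains m n l = {c. finite {xs. c xs \<noteq> 0} \<and> (\<forall>xs. c xs \<noteq> 0 \<longrightarrow> mag_gen m n l xs)}"

definition bd_coeff :: "'a metric \<Rightarrow> 'a list \<Rightarrow> 'a list \<Rightarrow> int" where
  "bd_coeff m xs ys = (\<Sum>i\<in>{1..<length xs - 1}.
      if between m (xs ! (i - 1)) (xs ! i) (xs ! (i + 1)) \<and> ys = take i xs @ drop (Suc i) xs
      then (-1) ^ i else 0)"

definition mag_boundary :: "'a metric \<Rightarrow> ('a list \<Rightarrow> int) \<Rightarrow> 'a list \<Rightarrow> int" where
  "mag_boundary m c ys = (\<Sum>xs\<in>{xs. c xs \<noteq> 0}. c xs * bd_coeff m xs ys)"

definition HM_vanishes :: "'a metric \<Rightarrow> nat \<Rightarrow> bool" where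
  "HM_vanishes m n \<longleftrightarrow> (\<forall>l::real. \<forall>c\<in>mag_chains m n l.
      mag_boundary m c = (\<lambda>_. 0) \<longrightarrow> (\<exists>b\<in>mag_chains m (Suc n) l. mag_boundary m b = c))"

end

theory Submission
  imports Defs
begin

text \<open>Fix for every pair \<open>a \<noteq> b\<close> that has points strictly between them one such point
  \<open>p(a, b)\<close>. Every generator \<open>(a, y, b)\<close> of a 2-chain is homologous either to \<open>0\<close> or to
  \<open>(a, p(a, b), b)\<close>. If \<open>y\<close> is not between \<open>a\<close> and \<open>b\<close>, pick \<open>z\<close> strictly between \<open>a\<close>
  and \<open>y\<close> such that \<open>y\<close> is still not between \<open>z\<close> and \<open>b\<close> (by Menger convexity and the
  absence of 4-cuts, or on a geodesic close to \<open>a\<close>); then \<open>\<partial>(a, z, y, b) = -(a, y, b)\<close>.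
  If \<open>y\<close> is between them, geodeticity puts \<open>y\<close> and \<open>p(a, b)\<close> in order on the segment, and
  the corresponding 3-simplex has boundary \<open>\<plusminus>((a, y, b) - (a, p(a, b), b))\<close>. Hence a 2-cycle
  is homologous to a combination of the \<open>(a, p(a, b), b)\<close>, whose coefficient on each pair
  \<open>(a, b)\<close> is minus the coefficient of \<open>(a, b)\<close> in its boundary, i.e. zero.\<close>

lemma mag_gen_2_iff:
  "mag_gen m 2 l xs \<longleftrightarrow> (\<exists>a y b. xs = [a, y, b] \<and> a \<in> mspace m \<and> y \<in> mspace m \<and> b \<in> mspace m
     \<and> a \<noteq> y \<and> y \<noteq> b \<and> mdist m a y + mdist m y b = l)"
proof
  assume gen: "mag_gen m 2 l xs"
  then have "length xs = 3" by (simp add: mag_gen_def)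
  then obtain a y b where "xs = [a, y, b]"
    by (auto simp: numeral_3_eq_3 length_Suc_conv)
  with gen show "\<exists>a y b. xs = [a, y, b] \<and> a \<in> mspace m \<and> y \<in> mspace m \<and> b \<in> mspace m
     \<and> a \<noteq> y \<and> y \<noteq> b \<and> mdist m a y + mdist m y b = l"
    unfolding mag_gen_def by (auto simp: numeral_2_eq_2 less_Suc_eq)
next
  assume "\<exists>a y b. xs = [a, y, b] \<and> a \<in> mspace m \<and> y \<in> mspace m \<and> b \<in> mspace m
     \<and> a \<noteq> y \<and> y \<noteq> b \<and> mdist m a y + mdist m y b = l"
  then show "mag_gen m 2 l xs"
    unfolding mag_gen_def by (auto simp: numeral_2_eq_2 less_Suc_eq)
qed

lemma mag_gen_3I:
  assumes "a \<in> mspace m" "y \<in> mspace m" "z \<in> mspace m" "b \<in> mspace m"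
    and "a \<noteq> y" "y \<noteq> z" "z \<noteq> b"
  shows "mag_gen m 3 (mdist m a y + mdist m y z + mdist m z b) [a, y, z, b]"
  using assms unfolding mag_gen_def by (auto simp: numeral_3_eq_3 less_Suc_eq)

lemma bd_coeff_length_3:
  "bd_coeff m [a, y, b] ys = (if between m a y b \<and> ys = [a, b] then -1 else 0)"
proof -
  have "{1..<length [a, y, b] - 1} = {1::nat}" by auto
  then show ?thesis unfolding bd_coeff_def by (simp only:) simp
qed

lemma bd_coeff_length_4:
  "bd_coeff m [a, y, z, b] ys =
     (if between m a y z \<and> ys = [a, z, b] then -1 else 0)
   + (if between m y z b \<and> ys = [a, y, b] then 1 else 0)"
proof -
  have "{1..<length [a, y, z, b] - 1} = {1::nat, 2}" by auto
  then show ?thesis by (simp add: bd_coeff_def numeral_2_eq_2)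
qed

lemma mag_boundary_eq_sum_superset:
  assumes "finite T" "{xs. c xs \<noteq> 0} \<subseteq> T"
  shows "mag_boundary m c ys = (\<Sum>xs\<in>T. c xs * bd_coeff m xs ys)"
  unfolding mag_boundary_def by (rule sum.mono_neutral_left) (use assms in auto)

lemma mag_boundary_length_2_chain:
  assumes "c \<in> mag_chains m 2 l"
  shows "mag_boundary m c [a, b] =
    - (\<Sum>xs | c xs \<noteq> 0. if between m (xs ! 0) (xs ! 1) (xs ! 2) \<and> xs ! 0 = a \<and> xs ! 2 = b
                        then c xs else 0)"
proof -
  have "mag_boundary m c [a, b] = (\<Sum>xs | c xs \<noteq> 0. c xs * bd_coeff m xs [a, b])"
    by (simp add: mag_boundary_def)
  also have "\<dots> = (\<Sum>xs | c xs \<noteq> 0. - (if between m (xs ! 0) (xs ! 1) (xs ! 2)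
                     \<and> xs ! 0 = a \<and> xs ! 2 = b then c xs else 0))"
  proof (rule sum.cong)
    fix xs assume "xs \<in> {xs. c xs \<noteq> 0}"
    then obtain x0 x1 x2 where "xs = [x0, x1, x2]"
      using assms unfolding mag_chains_def mag_gen_2_iff by blast
    then show "c xs * bd_coeff m xs [a, b] = - (if between m (xs ! 0) (xs ! 1) (xs ! 2)
                     \<and> xs ! 0 = a \<and> xs ! 2 = b then c xs else 0)"
      by (auto simp: bd_coeff_length_3)
  qed simp
  finally show ?thesis by (simp add: sum_negf)
qed

definition combination :: "('b \<Rightarrow> int) \<Rightarrow> ('b \<Rightarrow> 'a list) \<Rightarrow> 'b set \<Rightarrow> 'a list \<Rightarrow> int" where
  "combination k w S = (\<lambda>zs. \<Sum>x\<in>S. if zs = w x then k x else 0)"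

lemma combination_support:
  "{zs. combination k w S zs \<noteq> 0} \<subseteq> w ` {x\<in>S. k x \<noteq> 0}"
proof
  fix zs assume "zs \<in> {zs. combination k w S zs \<noteq> 0}"
  then obtain x where "x \<in> S" "(if zs = w x then k x else 0) \<noteq> 0"
    unfolding combination_def using sum.not_neutral_contains_not_neutral by blast
  then show "zs \<in> w ` {x\<in>S. k x \<noteq> 0}" by (auto split: if_splits)
qed

lemma combination_in_mag_chains:
  assumes "finite S" "\<And>x. x \<in> S \<Longrightarrow> k x \<noteq> 0 \<Longrightarrow> mag_gen m n l (w x)"
  shows "combination k w S \<in> mag_chains m n l"
proof -
  have "finite {zs. combination k w S zs \<noteq> 0}"
    by (rule finite_subset[OF combination_support]) (use assms(1) in simp)
  moreover have "mag_gen m n l zs" if "combination k w S zs \<noteq> 0" for zs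
    using combination_support[of k w S] that assms(2) by blast
  ultimately show ?thesis unfolding mag_chains_def by blast
qed

lemma mag_boundary_combination:
  assumes "finite S"
  shows "mag_boundary m (combination k w S) ys = (\<Sum>x\<in>S. k x * bd_coeff m (w x) ys)"
proof -
  have "mag_boundary m (combination k w S) ys
      = (\<Sum>zs\<in>w ` S. combination k w S zs * bd_coeff m zs ys)"
    using combination_support[of k w S] assms
    by (intro mag_boundary_eq_sum_superset) auto
  also have "\<dots> = (\<Sum>x\<in>S. \<Sum>zs\<in>w ` S. if zs = w x then k x * bd_coeff m zs ys else 0)"
    unfolding combination_def sum_distrib_right by (subst sum.swap) (auto intro!: sum.cong)
  also have "\<dots> = (\<Sum>x\<in>S. k x * bd_coeff m (w x) ys)"
    using assms by simp
  finally show ?thesis .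
qed

lemma between_ends_distinct:
  assumes "between m a y b" "a \<in> mspace m" "y \<in> mspace m" "a \<noteq> y"
  shows "a \<noteq> b"
proof
  assume "a = b"
  with assms(1,2) have "mdist m a y + mdist m y a = 0" by (simp add: between_def)
  with assms(2-4) show False
    using mdist_zero[of a m y] mdist_nonneg[of m a y] mdist_nonneg[of m y a] by linarith
qed

lemma corner_point_menger_no_4_cuts:
  assumes "menger_convex m" "no_4_cuts m"
    and "a \<in> mspace m" "y \<in> mspace m" "b \<in> mspace m" "a \<noteq> y" "\<not> between m a y b"
  obtains z where "z \<in> mspace m" "z \<noteq> a" "z \<noteq> y" "between m a z y" "\<not> between m z y b"
proof -
  obtain z where z: "z \<in> mspace m" "a \<noteq> z" "z \<noteq> y" "between m a z y"
    using assms(1,3,4,6) unfolding menger_convex_def by blast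
  have "\<not> between m z y b"
  proof
    assume "between m z y b"
    then have "mdist m a b = mdist m a z + mdist m z y + mdist m y b"
      using assms(2,3,4,5) z unfolding no_4_cuts_def by blast
    with z(4) assms(7) show False unfolding between_def by linarith
  qed
  with z that show thesis by auto
qed

text \<open>The point \<open>z\<close> is taken on a geodesic from \<open>a\<close> to \<open>y\<close>, at distance less than half the
  defect \<open>d(a,y) + d(y,b) - d(a,b)\<close> from \<open>a\<close>.\<close>

lemma corner_point_geodesic:
  assumes "geodesic_space m"
    and a: "a \<in> mspace m" and y: "y \<in> mspace m" and b: "b \<in> mspace m"
    and "a \<noteq> y" "\<not> between m a y b"
  obtains z where "z \<in> mspace m" "z \<noteq> a" "z \<noteq> y" "between m a z y" "\<not> between m z y b"
proof -
  obtain D g where "0 \<le> D" and g_in: "g ` {0..D} \<subseteq> mspace m"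
    and g_isom: "\<forall>s\<in>{0..D}. \<forall>t\<in>{0..D}. mdist m (g s) (g t) = \<bar>s - t\<bar>"
    and "g 0 = a" "g D = y"
    using assms(1) a y unfolding geodesic_space_def by blast
  then have D: "mdist m a y = D" by force
  with a y \<open>a \<noteq> y\<close> have "D > 0" using mdist_zero[of a m y] mdist_nonneg[of m a y] by linarith
  define e where "e = mdist m a y + mdist m y b - mdist m a b"
  have "e > 0"
    using mdist_triangle[OF a y b] assms(6) unfolding e_def between_def by linarith
  define t where "t = min (D / 2) (e / 4)"
  have t: "0 < t" "t < D" "t \<le> e / 4"
    using \<open>D > 0\<close> \<open>e > 0\<close> unfolding t_def by auto
  then have "t \<in> {0..D}" by auto
  define z where "z = g t"
  have z: "z \<in> mspace m" using g_in \<open>t \<in> {0..D}\<close> unfolding z_def by auto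
  have az: "mdist m a z = t" and zy: "mdist m z y = D - t"
    using g_isom \<open>t \<in> {0..D}\<close> \<open>0 \<le> D\<close> \<open>g 0 = a\<close> \<open>g D = y\<close> t unfolding z_def by force+
  have "z \<noteq> a" using az t(1) mdist_zero[OF a a] by auto
  moreover have "z \<noteq> y" using zy t(2) mdist_zero[OF y y] by auto
  moreover have "between m a z y" using az zy D unfolding between_def by simp
  moreover have "\<not> between m z y b"
  proof
    assume "between m z y b"
    then have "mdist m z b = D - t + mdist m y b" using zy unfolding between_def by simp
    moreover have "mdist m z b \<le> t + mdist m a b"
      using mdist_triangle[OF z a b] az mdist_commute[of m z a] by simp
    ultimately have "e \<le> 2 * t" using D unfolding e_def by linarith
    with t(3) \<open>e > 0\<close> show False by linarith
  qed
  ultimately show thesis using z that by blast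
qed

lemma non_between_triple_is_boundary:
  assumes "(menger_convex m \<and> no_4_cuts m) \<or> geodesic_space m"
    and "a \<in> mspace m" "y \<in> mspace m" "b \<in> mspace m" "a \<noteq> y" "y \<noteq> b"
    and "\<not> between m a y b"
  obtains w where "mag_gen m 3 (mdist m a y + mdist m y b) w"
    and "\<And>ys. bd_coeff m w ys = - (if ys = [a, y, b] then 1 else 0)"
proof -
  obtain z where z: "z \<in> mspace m" "z \<noteq> a" "z \<noteq> y" "between m a z y" "\<not> between m z y b"
    using assms(1)
  proof (elim disjE conjE)
    assume "menger_convex m" "no_4_cuts m"
    from corner_point_menger_no_4_cuts[OF this assms(2-5,7) that] show thesis .
  next
    assume "geodesic_space m"
    from corner_point_geodesic[OF this assms(2-5,7) that] show thesis .
  qed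
  have "mag_gen m 3 (mdist m a z + mdist m z y + mdist m y b) [a, z, y, b]"
    using assms(2-6) z by (intro mag_gen_3I) auto
  moreover have "mdist m a z + mdist m z y = mdist m a y"
    using z(4) unfolding between_def .
  moreover have "bd_coeff m [a, z, y, b] ys = - (if ys = [a, y, b] then 1 else 0)" for ys
    using z(4,5) unfolding bd_coeff_length_4 by auto
  ultimately show thesis using that by auto
qed

definition some_between :: "'a metric \<Rightarrow> 'a \<Rightarrow> 'a \<Rightarrow> 'a" where
  "some_between m a b = (SOME y. y \<in> mspace m \<and> y \<noteq> a \<and> y \<noteq> b \<and> between m a y b)"

lemma some_between_strictly_between:
  assumes "y \<in> mspace m" "y \<noteq> a" "y \<noteq> b" "between m a y b"
  shows "some_between m a b \<in> mspace m" "some_between m a b \<noteq> a" "some_between m a b \<noteq> b"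
    and "between m a (some_between m a b) b"
proof -
  have "\<exists>y. y \<in> mspace m \<and> y \<noteq> a \<and> y \<noteq> b \<and> between m a y b"
    using assms by blast
  then have "some_between m a b \<in> mspace m \<and> some_between m a b \<noteq> a \<and> some_between m a b \<noteq> b
      \<and> between m a (some_between m a b) b"
    unfolding some_between_def by (rule someI_ex)
  then show "some_between m a b \<in> mspace m" "some_between m a b \<noteq> a" "some_between m a b \<noteq> b"
    and "between m a (some_between m a b) b" by auto
qed

lemma between_triple_homologous_to_some_between:
  assumes "geodetic m"
    and a: "a \<in> mspace m" and y: "y \<in> mspace m" and b: "b \<in> mspace m"
    and "a \<noteq> y" "y \<noteq> b" "between m a y b"
  obtains s w where "s \<noteq> 0 \<Longrightarrow> mag_gen m 3 (mdist m a y + mdist m y b) w"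
    and "\<And>ys. s * bd_coeff m w ys =
           (if ys = [a, y, b] then 1 else 0) - (if ys = [a, some_between m a b, b] then 1 else 0)"
proof (cases "y = some_between m a b")
  case True
  show thesis by (rule that[of 0 "[]"]) (use True in simp_all)
next
  case False
  let ?y' = "some_between m a b"
  have y': "?y' \<in> mspace m" "?y' \<noteq> a" "?y' \<noteq> b" "between m a ?y' b"
    using some_between_strictly_between[OF y] assms(5-7) by auto
  have "a \<noteq> b" using between_ends_distinct[OF assms(7) a y assms(5)] .
  with assms(1) a b y y'(1,4) assms(7)
  have "(between m a y ?y' \<and> between m y ?y' b) \<or> (between m a ?y' y \<and> between m ?y' y b)"
    unfolding geodetic_def by blast
  then consider "between m a y ?y'" "between m y ?y' b" | "between m a ?y' y" "between m ?y' y b"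
    by blast
  then show thesis
  proof cases
    case 1
    have "mag_gen m 3 (mdist m a y + mdist m y b) [a, y, ?y', b]"
      using mag_gen_3I[of a m y ?y' b] a y b y' assms(5) False 1(2)
      unfolding between_def by (simp add: add.assoc)
    moreover have "1 * bd_coeff m [a, y, ?y', b] ys =
           (if ys = [a, y, b] then 1 else 0) - (if ys = [a, ?y', b] then 1 else 0)" for ys
      using 1 False unfolding bd_coeff_length_4 by auto
    ultimately show thesis by (rule that)
  next
    case 2
    have "mag_gen m 3 (mdist m a y + mdist m y b) [a, ?y', y, b]"
      using mag_gen_3I[of a m ?y' y b] a y b y' assms(6) False 2(1)
      unfolding between_def by simp
    moreover have "- 1 * bd_coeff m [a, ?y', y, b] ys =
           (if ys = [a, y, b] then 1 else 0) - (if ys = [a, ?y', b] then 1 else 0)" for ys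
      using 2 False unfolding bd_coeff_length_4 by auto
    ultimately show thesis by (rule that)
  qed
qed

definition straighten :: "'a metric \<Rightarrow> 'a list \<Rightarrow> 'a list" where
  "straighten m xs = [xs ! 0, some_between m (xs ! 0) (xs ! 2), xs ! 2]"

definition straightened :: "'a metric \<Rightarrow> 'a list \<Rightarrow> 'a list \<Rightarrow> int" where
  "straightened m xs ys =
     (if between m (xs ! 0) (xs ! 1) (xs ! 2) \<and> ys = straighten m xs then 1 else 0)"

lemma mag_gen_2_homologous_to_straightened:
  assumes "geodetic m" "(menger_convex m \<and> no_4_cuts m) \<or> geodesic_space m"
    and "mag_gen m 2 l xs"
  shows "\<exists>s w. (s \<noteq> 0 \<longrightarrow> mag_gen m 3 l w) \<and>
           (\<forall>ys. s * bd_coeff m w ys = (if ys = xs then 1 else 0) - straightened m xs ys)"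
proof -
  obtain a y b where xs: "xs = [a, y, b]" and abc: "a \<in> mspace m" "y \<in> mspace m" "b \<in> mspace m"
    "a \<noteq> y" "y \<noteq> b" and l: "l = mdist m a y + mdist m y b"
    using assms(3) unfolding mag_gen_2_iff by blast
  show ?thesis
  proof (cases "between m a y b")
    case True
    show ?thesis
    proof (rule between_triple_homologous_to_some_between[OF assms(1) abc True])
      fix s w
      assume "s \<noteq> 0 \<Longrightarrow> mag_gen m 3 (mdist m a y + mdist m y b) w"
        and "\<And>ys. s * bd_coeff m w ys =
           (if ys = [a, y, b] then 1 else 0) - (if ys = [a, some_between m a b, b] then 1 else 0)"
      then show ?thesis
        using True l
        by (intro exI[of _ s] exI[of _ w]) (auto simp: xs straightened_def straighten_def)
    qed
  next
    case False
    show ?thesis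
    proof (rule non_between_triple_is_boundary[OF assms(2) abc False])
      fix w
      assume "mag_gen m 3 (mdist m a y + mdist m y b) w"
        and "\<And>ys. bd_coeff m w ys = - (if ys = [a, y, b] then 1 else 0)"
      then show ?thesis
        using False l by (intro exI[of _ "-1"] exI[of _ w]) (auto simp: xs straightened_def)
    qed
  qed
qed

lemma mag_chain_2_homologous_to_straightened:
  assumes "geodetic m" "(menger_convex m \<and> no_4_cuts m) \<or> geodesic_space m"
    and c: "c \<in> mag_chains m 2 l"
  obtains b where "b \<in> mag_chains m 3 l"
    and "\<And>ys. mag_boundary m b ys = c ys - (\<Sum>xs | c xs \<noteq> 0. c xs * straightened m xs ys)"
proof -
  let ?S = "{xs. c xs \<noteq> 0}"
  have fin: "finite ?S" using c unfolding mag_chains_def by blast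
  have "\<forall>xs\<in>?S. \<exists>s w. (s \<noteq> 0 \<longrightarrow> mag_gen m 3 l w) \<and>
           (\<forall>ys. s * bd_coeff m w ys = (if ys = xs then 1 else 0) - straightened m xs ys)"
    using mag_gen_2_homologous_to_straightened[OF assms(1,2)] c unfolding mag_chains_def by blast
  then obtain s w where sw: "\<forall>xs\<in>?S. (s xs \<noteq> 0 \<longrightarrow> mag_gen m 3 l (w xs)) \<and>
      (\<forall>ys. s xs * bd_coeff m (w xs) ys = (if ys = xs then 1 else 0) - straightened m xs ys)"
    by metis
  define b where "b = combination (\<lambda>xs. c xs * s xs) w ?S"
  have "b \<in> mag_chains m 3 l"
    unfolding b_def using fin sw by (intro combination_in_mag_chains) auto
  moreover have "mag_boundary m b ys = c ys - (\<Sum>xs\<in>?S. c xs * straightened m xs ys)" for ys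
  proof -
    have "mag_boundary m b ys = (\<Sum>xs\<in>?S. c xs * (s xs * bd_coeff m (w xs) ys))"
      unfolding b_def using fin by (simp add: mag_boundary_combination mult.assoc)
    also have "\<dots> = (\<Sum>xs\<in>?S. if ys = xs then c xs else 0) - (\<Sum>xs\<in>?S. c xs * straightened m xs ys)"
      unfolding sum_subtractf[symmetric] using sw by (intro sum.cong) (auto simp: right_diff_distrib)
    also have "\<dots> = c ys - (\<Sum>xs\<in>?S. c xs * straightened m xs ys)"
      using fin by simp
    finally show ?thesis .
  qed
  ultimately show thesis using that by blast
qed

lemma cycle_straightened_sum_eq_0:
  assumes "c \<in> mag_chains m 2 l" "mag_boundary m c = (\<lambda>_. 0)"
  shows "(\<Sum>xs | c xs \<noteq> 0. c xs * straightened m xs ys) = 0"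
proof (cases "ys = straighten m ys")
  case True
  then have "ys = straighten m xs \<longleftrightarrow> xs ! 0 = ys ! 0 \<and> xs ! 2 = ys ! 2" for xs
    unfolding straighten_def by (auto simp: numeral_2_eq_2)
  then have "c xs * straightened m xs ys = (if between m (xs ! 0) (xs ! 1) (xs ! 2)
      \<and> xs ! 0 = ys ! 0 \<and> xs ! 2 = ys ! 2 then c xs else 0)" for xs
    unfolding straightened_def by auto
  then show ?thesis
    using mag_boundary_length_2_chain[OF assms(1), of "ys ! 0" "ys ! 2"] assms(2) by simp
next
  case False
  then have "ys \<noteq> straighten m xs" for xs
    unfolding straighten_def by (auto simp: numeral_2_eq_2)
  then show ?thesis by (simp add: straightened_def)
qed

theorem theorem7p22:
  fixes m :: "'a metric"
  assumes "geodetic m"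
    and "(menger_convex m \<and> no_4_cuts m) \<or> geodesic_space m"
  shows "HM_vanishes m 2"
  unfolding HM_vanishes_def
proof (intro allI ballI impI)
  fix l c
  assume c: "c \<in> mag_chains m 2 l" and cycle: "mag_boundary m c = (\<lambda>_. 0)"
  obtain b where "b \<in> mag_chains m 3 l"
    and "\<And>ys. mag_boundary m b ys = c ys - (\<Sum>xs | c xs \<noteq> 0. c xs * straightened m xs ys)"
    using mag_chain_2_homologous_to_straightened[OF assms c] by blast
  then have "b \<in> mag_chains m (Suc 2) l" "mag_boundary m b = c"
    using cycle_straightened_sum_eq_0[OF c cycle] by (auto simp: numeral_3_eq_3)
  then show "\<exists>b\<in>mag_chains m (Suc 2) l. mag_boundary m b = c" by blast
qed

end
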